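(* There is an absolute constant $\epsilon_0\in(0,\frac14]$ such that for all sufficiently large even $d$ and every $i\in[\frac d2]$, the function $f_i:\{0,1\}^d\to\{0,1\}$ defined by $f_i(x)=1$ if $|x|>\frac d2+\sqrt d$, $f_i(x)=0$ if $|x|<\frac d2-\sqrt d$, and $f_i(x)=x_i\oplus x_{i+d/2}$ otherwise, is $\epsilon_0$-far from unate.
   Context: $|x|$ is the number of coordinates of $x\in\{0,1\}^d$ equal to $1$; $\oplus$ is XOR. A function $f:\{0,1\}^d\to\mathbb{R}$ is unate if each dimension $i\in[d]$ can be assigned a direction up or down such that: if up, $f(x)\le f(x+e_i)$ for all $x$ with $x_i=0$ (here $x+e_i$ is $x$ with the $i$-th bit set to 1); if down, $f(x)\ge f(x+e_i)$ for all such $x$. The distance between two functions is the fraction of points where they differ; $f$ is $\epsilon$-far from unate if its distance to every unate function is at least $\epsilon$. *)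

theory Defs
  imports Complex_Main
begin

text \<open>Points of the hypercube {0,1}^d are represented as boolean functions on nat
  that vanish outside coordinates 0..d-1 (coordinates are 0-based).\<close>

definition cube :: "nat \<Rightarrow> (nat \<Rightarrow> bool) set" where
  "cube d = {x. \<forall>j\<ge>d. \<not> x j}"

definition weight :: "nat \<Rightarrow> (nat \<Rightarrow> bool) \<Rightarrow> nat" where
  "weight d x = card {j. j < d \<and> x j}"

definition unate :: "nat \<Rightarrow> ((nat \<Rightarrow> bool) \<Rightarrow> real) \<Rightarrow> bool" where
  "unate d f \<longleftrightarrow> (\<exists>up :: nat \<Rightarrow> bool. \<forall>i<d. \<forall>x\<in>cube d. \<not> x i \<longrightarrow>
      (if up i then f x \<le> f (x(i := True)) else f x \<ge> f (x(i := True))))"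

definition dist_fun :: "nat \<Rightarrow> ((nat \<Rightarrow> bool) \<Rightarrow> real) \<Rightarrow> ((nat \<Rightarrow> bool) \<Rightarrow> real) \<Rightarrow> real" where
  "dist_fun d f g = real (card {x\<in>cube d. f x \<noteq> g x}) / 2 ^ d"

definition far_from_unate :: "real \<Rightarrow> nat \<Rightarrow> ((nat \<Rightarrow> bool) \<Rightarrow> real) \<Rightarrow> bool" where
  "far_from_unate \<epsilon> d f \<longleftrightarrow> (\<forall>g. unate d g \<longrightarrow> dist_fun d f g \<ge> \<epsilon>)"

text \<open>The function f_i; i is 0-based here (paper's i in [d/2] corresponds to i+1).\<close>
definition f_fun :: "nat \<Rightarrow> nat \<Rightarrow> (nat \<Rightarrow> bool) \<Rightarrow> real" where
  "f_fun d i x =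
    (if real (weight d x) > real d / 2 + sqrt (real d) then 1
     else if real (weight d x) < real d / 2 - sqrt (real d) then 0
     else (if x i \<noteq> x (i + d div 2) then 1 else 0))"

end

theory Submission imports Defs begin

text \<open>For i \<noteq> j, the function (a, b) \<mapsto> a \<oplus> b on a square {y(i:=a, j:=b)} is
  monotone in direction i neither upwards nor downwards, so any unate g disagrees with it
  somewhere on each such square. Since |2|x| - d| has second moment d, by Chebyshev at least
  3/5 of the cube lies at distance \<le> \<surd>d - 2 from the middle layer; the squares through these
  points lie entirely in the region where f_i is the XOR, and each point of disagreement is
  shared by at most 4 squares. Hence f_i and g differ on at least (3/5)/4 \<ge> 1/10 of the cube
  once d \<ge> 100.\<close>

lemma cube_0: "cube 0 = {\<lambda>_. False}"
  by (auto simp: cube_def)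

lemma cube_Suc: "cube (Suc d) = cube d \<union> (\<lambda>x. x(d := True)) ` cube d"
proof
  show "cube (Suc d) \<subseteq> cube d \<union> (\<lambda>x. x(d := True)) ` cube d"
  proof
    fix x assume x: "x \<in> cube (Suc d)"
    show "x \<in> cube d \<union> (\<lambda>x. x(d := True)) ` cube d"
    proof (cases "x d")
      case True
      then have "x = (x(d := False))(d := True)" and "x(d := False) \<in> cube d"
        using x by (auto simp: fun_eq_iff cube_def)
      then show ?thesis by blast
    next
      case False
      with x have "x \<in> cube d"
        by (auto simp: cube_def) (metis le_antisym not_less_eq_eq)
      then show ?thesis by blast
    qed
  qed
qed (auto simp: cube_def)

lemma inj_on_upd_cube: "inj_on (\<lambda>x. x(d := True)) (cube d)"
  unfolding inj_on_def cube_def by (auto simp: fun_eq_iff)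

lemma cube_disjoint_upd_cube: "cube d \<inter> (\<lambda>x. x(d := True)) ` cube d = {}"
  by (auto simp: cube_def)

lemma finite_cube [simp]: "finite (cube d)"
  by (induction d) (simp_all add: cube_0 cube_Suc)

lemma card_cube: "card (cube d) = 2 ^ d"
  by (induction d)
    (simp_all add: cube_0 cube_Suc card_Un_disjoint cube_disjoint_upd_cube card_image inj_on_upd_cube)

lemma weight_Suc_cube: "x \<in> cube d \<Longrightarrow> weight (Suc d) x = weight d x"
  unfolding weight_def cube_def by (rule arg_cong[where f = card]) (auto simp: less_Suc_eq)

lemma weight_Suc_upd_cube: "x \<in> cube d \<Longrightarrow> weight (Suc d) (x(d := True)) = Suc (weight d x)"
proof -
  have "{j. j < Suc d \<and> (x(d := True)) j} = insert d {j. j < d \<and> x j}"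
    by (auto simp: less_Suc_eq)
  then show ?thesis unfolding weight_def by simp
qed

lemma weight_upd_le: "weight d (y(k := a)) \<le> weight d y + 1"
proof -
  have "weight d (y(k := a)) \<le> card (insert k {j. j < d \<and> y j})"
    unfolding weight_def by (intro card_mono) auto
  also have "\<dots> \<le> weight d y + 1"
    unfolding weight_def by (simp add: card_insert_if)
  finally show ?thesis .
qed

lemma weight_upd_diff: "\<bar>real (weight d (y(k := a))) - real (weight d y)\<bar> \<le> 1"
  using weight_upd_le[of d y k a] weight_upd_le[of d "y(k := a)" k "y k"] by simp

lemma sum_cube_centered_weight_sq:
  "(\<Sum>x\<in>cube d. (2 * real (weight d x) - real d)^2) = real d * 2 ^ d"
proof (induction d)
  case 0
  then show ?case by (simp add: cube_0 weight_def)
next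
  case (Suc d)
  let ?c = "\<lambda>x. 2 * real (weight d x) - real d"
  have "(\<Sum>x\<in>cube (Suc d). (2 * real (weight (Suc d) x) - real (Suc d))^2)
      = (\<Sum>x\<in>cube d. (?c x - 1)^2) + (\<Sum>x\<in>cube d. (?c x + 1)^2)"
    unfolding cube_Suc
    by (simp add: sum.union_disjoint cube_disjoint_upd_cube sum.reindex inj_on_upd_cube
        weight_Suc_cube weight_Suc_upd_cube algebra_simps)
  also have "\<dots> = (\<Sum>x\<in>cube d. 2 * (?c x)^2 + 2)"
    by (simp add: sum.distrib[symmetric] power2_eq_square algebra_simps)
  also have "\<dots> = 2 * (\<Sum>x\<in>cube d. (?c x)^2) + 2 * real (card (cube d))"
    by (simp add: sum.distrib sum_distrib_left)
  also have "\<dots> = real (Suc d) * 2 ^ Suc d"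
    using Suc by (simp add: card_cube algebra_simps)
  finally show ?case .
qed

lemma card_cube_weight_tail:
  assumes "t > 0"
  shows "real (card {y\<in>cube d. t < \<bar>2 * real (weight d y) - real d\<bar>}) * t^2 \<le> real d * 2 ^ d"
proof -
  let ?T = "{y\<in>cube d. t < \<bar>2 * real (weight d y) - real d\<bar>}"
  have "real (card ?T) * t^2 = (\<Sum>y\<in>?T. t^2)" by simp
  also have "\<dots> \<le> (\<Sum>y\<in>?T. (2 * real (weight d y) - real d)^2)"
    using assms by (intro sum_mono) (simp add: abs_le_square_iff[symmetric])
  also have "\<dots> \<le> (\<Sum>y\<in>cube d. (2 * real (weight d y) - real d)^2)"
    by (intro sum_mono2) auto
  finally show ?thesis by (simp add: sum_cube_centered_weight_sq)
qed

lemma card_cube_weight_middle: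
  assumes "100 \<le> d"
  shows "3/5 * 2 ^ d \<le> real (card {y\<in>cube d. \<bar>2 * real (weight d y) - real d\<bar> \<le> 2 * sqrt d - 4})"
proof -
  let ?t = "2 * sqrt d - 4"
  let ?G = "{y\<in>cube d. \<bar>2 * real (weight d y) - real d\<bar> \<le> ?t}"
  let ?T = "{y\<in>cube d. ?t < \<bar>2 * real (weight d y) - real d\<bar>}"
  have sqrt_d: "10 \<le> sqrt d"
    using real_sqrt_le_mono[of 100 d] assms by simp
  have "64/25 * real d = (8/5 * sqrt d)^2"
    by (simp add: power_mult_distrib power_divide)
  also have "\<dots> \<le> ?t^2"
    using sqrt_d by (intro power_mono) auto
  finally have "64/25 * real d \<le> ?t^2" .
  then have "real (card ?T) * (64/25 * real d) \<le> real (card ?T) * ?t^2"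
    by (rule mult_left_mono) auto
  also have "\<dots> \<le> real d * 2 ^ d"
    by (rule card_cube_weight_tail) (use sqrt_d in auto)
  finally have "real d * (real (card ?T) * (64/25)) \<le> real d * 2 ^ d"
    by (simp only: mult_ac)
  then have "real (card ?T) * (64/25) \<le> 2 ^ d"
    using assms by (simp add: mult_le_cancel_left_pos)
  moreover have "real (card ?G) + real (card ?T) = 2 ^ d"
  proof -
    have "card (?G \<union> ?T) = card ?G + card ?T"
      by (rule card_Un_disjoint) auto
    moreover have "?G \<union> ?T = cube d" by auto
    ultimately have card_sum: "card ?G + card ?T = 2 ^ d"
      using card_cube[of d] by argo
    show ?thesis
      using arg_cong[where f = real, OF card_sum] by simp
  qed
  ultimately show ?thesis
    by linarith
qed

lemma weight_upd2_diff: "\<bar>real (weight d (y(i := a, j := b))) - real (weight d y)\<bar> \<le> 2"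
  using weight_upd_diff[of d "y(i := a)" j b] weight_upd_diff[of d y i a] by linarith

definition square :: "(nat \<Rightarrow> bool) \<Rightarrow> nat \<Rightarrow> nat \<Rightarrow> (nat \<Rightarrow> bool) set" where
  "square y i j = (\<lambda>(a, b). y(i := a, j := b)) ` UNIV"

lemma mem_square_upd: "y \<in> square (y(i := a, j := b)) i j"
proof -
  have "y = (y(i := a, j := b))(i := y i, j := y j)"
    by (auto simp: fun_eq_iff)
  then show ?thesis
    unfolding square_def by (intro image_eqI[where x = "(y i, y j)"]) auto
qed

lemma card_square_le: "card (square y i j) \<le> 4"
proof -
  have "card (square y i j) \<le> card (UNIV :: (bool \<times> bool) set)"
    unfolding square_def by (rule card_image_le) simp
  also have "\<dots> = 4"
    by (simp add: card_UNIV_bool UNIV_Times_UNIV[symmetric] card_cartesian_product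
        del: UNIV_Times_UNIV)
  finally show ?thesis .
qed

lemma card_UN_square_le:
  assumes "finite S"
  shows "card (\<Union>q\<in>S. square q i j) \<le> 4 * card S"
proof -
  have "card (\<Union>q\<in>S. square q i j) \<le> (\<Sum>q\<in>S. card (square q i j))"
    using assms by (rule card_UN_le)
  also have "\<dots> \<le> (\<Sum>q\<in>S. 4)"
    by (intro sum_mono card_square_le)
  finally show ?thesis by simp
qed

text \<open>In direction i the XOR increases on the line b = True and decreases on b = False,
  so neither orientation of coordinate i is compatible with it.\<close>
lemma unate_not_xor_on_square:
  assumes "unate d g" and "y \<in> cube d" and "i < d" and "j < d" and "i \<noteq> j"
  shows "\<exists>a b. g (y(i := a, j := b)) \<noteq> (if a \<noteq> b then 1 else 0)"
proof (rule ccontr)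
  let ?p = "\<lambda>a b. y(i := a, j := b)"
  assume "\<not> ?thesis"
  then have g_xor: "g (?p a b) = (if a \<noteq> b then 1 else 0)" for a b
    by blast
  obtain up where mono: "\<And>k x. k < d \<Longrightarrow> x \<in> cube d \<Longrightarrow> \<not> x k \<Longrightarrow>
      (if up k then g x \<le> g (x(k := True)) else g x \<ge> g (x(k := True)))"
    using assms(1) unfolding unate_def by blast
  have "?p False b \<in> cube d" and "\<not> ?p False b i" and "(?p False b)(i := True) = ?p True b" for b
    using assms(2-5) by (auto simp: cube_def fun_eq_iff)
  then have "if up i then g (?p False b) \<le> g (?p True b) else g (?p False b) \<ge> g (?p True b)" for b
    using mono[OF assms(3)] by metis
  from this[of True] this[of False] show False
    by (simp add: g_xor split: if_splits)
qed

lemma f_fun_square_xor: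
  assumes "0 < d div 2"
    and "\<bar>2 * real (weight d y) - real d\<bar> \<le> 2 * sqrt d - 4"
  shows "f_fun d i (y(i := a, i + d div 2 := b)) = (if a \<noteq> b then 1 else 0)"
proof -
  let ?p = "y(i := a, i + d div 2 := b)"
  have "\<not> real (weight d ?p) > real d / 2 + sqrt d" and "\<not> real (weight d ?p) < real d / 2 - sqrt d"
    using assms(2) weight_upd2_diff[of d y i a "i + d div 2" b] by auto
  moreover have "?p i = a" and "?p (i + d div 2) = b"
    using assms(1) by auto
  ultimately show ?thesis
    unfolding f_fun_def by simp
qed

lemma far_from_unate_f_fun:
  assumes "100 \<le> d" and "i < d div 2"
  shows "far_from_unate (1/10) d (f_fun d i)"
  unfolding far_from_unate_def
proof (intro allI impI)
  fix g assume g: "unate d g"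
  let ?j = "i + d div 2"
  let ?S = "{x\<in>cube d. f_fun d i x \<noteq> g x}"
  let ?G = "{y\<in>cube d. \<bar>2 * real (weight d y) - real d\<bar> \<le> 2 * sqrt d - 4}"
  have j: "i < d" "?j < d" "i \<noteq> ?j"
    using assms(2) by auto
  have "?G \<subseteq> (\<Union>q\<in>?S. square q i ?j)"
  proof
    fix y assume "y \<in> ?G"
    then have y: "y \<in> cube d" "\<bar>2 * real (weight d y) - real d\<bar> \<le> 2 * sqrt d - 4"
      by auto
    obtain a b where g_ab: "g (y(i := a, ?j := b)) \<noteq> (if a \<noteq> b then 1 else 0)"
      using unate_not_xor_on_square[OF g y(1) j] by blast
    have "y(i := a, ?j := b) \<in> cube d"
      using y(1) j by (simp add: cube_def)
    moreover have "f_fun d i (y(i := a, ?j := b)) = (if a \<noteq> b then 1 else 0)"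
      using assms(2) y(2) by (intro f_fun_square_xor) auto
    ultimately have "y(i := a, ?j := b) \<in> ?S"
      using g_ab by simp
    then show "y \<in> (\<Union>q\<in>?S. square q i ?j)"
      by (rule UN_I) (rule mem_square_upd)
  qed
  then have "card ?G \<le> card (\<Union>q\<in>?S. square q i ?j)"
    by (rule card_mono[rotated]) (simp add: square_def)
  also have "\<dots> \<le> 4 * card ?S"
    by (rule card_UN_square_le) simp
  finally have "real (card ?G) \<le> 4 * real (card ?S)"
    by linarith
  then have "3/20 * 2 ^ d \<le> real (card ?S)"
    using card_cube_weight_middle[OF assms(1)] by linarith
  then show "1/10 \<le> dist_fun d (f_fun d i) g"
    unfolding dist_fun_def by (simp add: field_simps)
qed

theorem claim12:
  shows "\<exists>\<epsilon>0::real. 0 < \<epsilon>0 \<and> \<epsilon>0 \<le> 1/4 \<and>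
    (\<exists>D. \<forall>d\<ge>D. even d \<longrightarrow> (\<forall>i < d div 2. far_from_unate \<epsilon>0 d (f_fun d i)))"
  using far_from_unate_f_fun by (intro exI[of _ "1/10"] conjI exI[of _ 100]) auto

end
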